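(* Let $n=2k$ with $k\ge 2$. Then $\{d_i : i=1,\ldots,n\}\cup\{a_{i'} : i'=1,\ldots,k\}$ is a strong resolving set of $S_n$.
   Context: For $n\ge 3$, $S_n$ is the graph with vertex set $\{a_i,b_i,c_i,d_i : 1\le i\le n\}$ and edge set $\{a_ia_{i+1}, b_ib_{i+1}, c_ic_{i+1}, d_id_{i+1}, a_{i+1}b_i, a_ib_i, b_ic_i, c_id_i : 1\le i\le n\}$, indices taken modulo $n$. $d$ is the graph distance. A vertex $w$ strongly resolves distinct vertices $u,v$ if $d(v,w)=d(v,u)+d(u,w)$ or $d(u,w)=d(u,v)+d(v,w)$. A set $S$ is a strong resolving set if every two distinct vertices are strongly resolved by some vertex of $S$. *)

theory Defs
  imports Main
begin

text \<open>Vertices of S_n: a_i, b_i, c_i, d_i for 1 <= i <= n, encoded as (kind, i).\<close>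
datatype vkind = A | B | C | D

type_synonym vertex = "vkind \<times> nat"

definition Sverts :: "nat \<Rightarrow> vertex set" where
  "Sverts n = UNIV \<times> {1..n}"

definition nxt :: "nat \<Rightarrow> nat \<Rightarrow> nat" where
  "nxt n i = i mod n + 1"

definition Sgen :: "nat \<Rightarrow> (vertex \<times> vertex) set" where
  "Sgen n = (\<Union>i\<in>{1..n}.
     {((A,i),(A,nxt n i)), ((B,i),(B,nxt n i)), ((C,i),(C,nxt n i)), ((D,i),(D,nxt n i)),
      ((A,nxt n i),(B,i)), ((A,i),(B,i)), ((B,i),(C,i)), ((C,i),(D,i))})"

definition Sadj :: "nat \<Rightarrow> (vertex \<times> vertex) set" where
  "Sadj n = Sgen n \<union> (Sgen n)\<inverse>"

definition Sdist :: "nat \<Rightarrow> vertex \<Rightarrow> vertex \<Rightarrow> nat" where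
  "Sdist n u v = (LEAST k. (u, v) \<in> (Sadj n) ^^ k)"

definition strongly_resolves :: "nat \<Rightarrow> vertex \<Rightarrow> vertex \<Rightarrow> vertex \<Rightarrow> bool" where
  "strongly_resolves n w u v \<longleftrightarrow>
     Sdist n v w = Sdist n v u + Sdist n u w \<or> Sdist n u w = Sdist n u v + Sdist n v w"

definition strong_resolving_set :: "nat \<Rightarrow> vertex set \<Rightarrow> bool" where
  "strong_resolving_set n S \<longleftrightarrow> S \<subseteq> Sverts n \<and>
     (\<forall>u\<in>Sverts n. \<forall>v\<in>Sverts n. u \<noteq> v \<longrightarrow> (\<exists>w\<in>S. strongly_resolves n w u v))"

end

theory Submission
  imports Defs
begin

text \<open>
  A pair containing a vertex of the set is resolved by that vertex. Otherwise let \<open>v = x_i\<close>,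
  \<open>x \<noteq> a\<close>, be the vertex of the pair on the layer closer to the \<open>d\<close>-cycle (if both are
  \<open>a\<close>-vertices, the one with the larger index; both indices then lie in \<open>k+1..2k\<close>).
  Then \<open>v\<close> lies on a geodesic from the other vertex \<open>u\<close> to \<open>d_i\<close>: the explicit walk
  \<open>u \<leadsto> v \<leadsto> d_i\<close> is no longer than a lower bound for \<open>d(u, d_i)\<close> given by a
  1-Lipschitz function on \<open>S_n\<close> vanishing at \<open>d_i\<close>.
\<close>

definition cyc_dist :: "nat \<Rightarrow> nat \<Rightarrow> nat \<Rightarrow> nat" where
  "cyc_dist n i j = (let d = if i \<le> j then j - i else i - j in min d (n - d))"

definition prev :: "nat \<Rightarrow> nat \<Rightarrow> nat" where
  "prev n i = (if i = 1 then n else i - 1)"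

lemma nxt_eq: "i \<in> {1..n} \<Longrightarrow> nxt n i = (if i = n then 1 else i + 1)"
  by (auto simp: nxt_def)

lemma prev_in_range: "i \<in> {1..n} \<Longrightarrow> prev n i \<in> {1..n}"
  by (auto simp: prev_def)

lemma prev_nxt: "i \<in> {1..n} \<Longrightarrow> prev n (nxt n i) = i"
  by (auto simp: nxt_eq prev_def)

lemma nxt_prev: "i \<in> {1..n} \<Longrightarrow> nxt n (prev n i) = i"
  by (auto simp: nxt_def prev_def)

lemma cyc_dist_self: "cyc_dist n i i = 0"
  by (simp add: cyc_dist_def)

lemma cyc_dist_commute: "cyc_dist n i j = cyc_dist n j i"
  by (simp add: cyc_dist_def)

lemma cyc_dist_nxt:
  assumes "i \<in> {1..n}" "j \<in> {1..n}"
  shows "cyc_dist n j (nxt n i) \<le> cyc_dist n j i + 1 \<and> cyc_dist n j i \<le> cyc_dist n j (nxt n i) + 1"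
  using assms by (auto simp: nxt_eq cyc_dist_def)

definition walk_le :: "nat \<Rightarrow> vertex \<Rightarrow> vertex \<Rightarrow> nat \<Rightarrow> bool" where
  "walk_le n u v m \<longleftrightarrow> (\<exists>m'\<le>m. (u, v) \<in> Sadj n ^^ m')"

lemma walk_le_refl: "walk_le n u u 0"
  unfolding walk_le_def by auto

lemma walk_le_gen: "(u, v) \<in> Sgen n \<or> (v, u) \<in> Sgen n \<Longrightarrow> walk_le n u v 1"
  unfolding walk_le_def Sadj_def by (intro exI[of _ 1]) auto

lemma walk_le_trans: "walk_le n u v a \<Longrightarrow> walk_le n v w b \<Longrightarrow> walk_le n u w (a + b)"
  unfolding walk_le_def
proof (elim exE conjE)
  fix a' b' assume "a' \<le> a" "(u, v) \<in> Sadj n ^^ a'" "b' \<le> b" "(v, w) \<in> Sadj n ^^ b'"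
  then show "\<exists>m'\<le>a + b. (u, w) \<in> Sadj n ^^ m'"
    by (intro exI[of _ "a' + b'"]) (auto simp: relpow_add)
qed

lemma Sadj_relpow_sym: "(u, v) \<in> Sadj n ^^ m \<Longrightarrow> (v, u) \<in> Sadj n ^^ m"
proof (induction m arbitrary: v)
  case (Suc m)
  then obtain y where "(u, y) \<in> Sadj n ^^ m" "(y, v) \<in> Sadj n"
    by (meson relpow_Suc_E)
  moreover have "(v, y) \<in> Sadj n"
    using \<open>(y, v) \<in> Sadj n\<close> by (auto simp: Sadj_def)
  ultimately show ?case
    using Suc.IH relpow_Suc_I2 by metis
qed simp

lemma walk_le_sym: "walk_le n u v a \<Longrightarrow> walk_le n v u a"
  unfolding walk_le_def using Sadj_relpow_sym by blast

lemma Sdist_le: "walk_le n u v m \<Longrightarrow> Sdist n u v \<le> m"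
  unfolding walk_le_def Sdist_def by (meson Least_le order_trans)

lemma Sdist_relpow: "walk_le n u v m \<Longrightarrow> (u, v) \<in> Sadj n ^^ Sdist n u v"
  unfolding walk_le_def Sdist_def by (meson LeastI)

lemma Sdist_triangle:
  assumes "walk_le n u v a" "walk_le n v w b"
  shows "Sdist n u w \<le> Sdist n u v + Sdist n v w"
proof -
  have "(u, w) \<in> Sadj n ^^ (Sdist n u v + Sdist n v w)"
    using Sdist_relpow[OF assms(1)] Sdist_relpow[OF assms(2)] by (auto simp: relpow_add)
  then show ?thesis
    unfolding Sdist_def by (rule Least_le)
qed

fun level :: "vkind \<Rightarrow> nat" where
  "level A = 3" | "level B = 2" | "level C = 1" | "level D = 0"

lemma walk_le_layer_step: "i \<in> {1..n} \<Longrightarrow> walk_le n (X, i) (X, nxt n i) 1"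
proof (rule walk_le_gen, rule disjI1)
  show "i \<in> {1..n} \<Longrightarrow> ((X, i), (X, nxt n i)) \<in> Sgen n"
    unfolding Sgen_def by (cases X; rule UN_I[of i]) auto
qed

lemma walk_le_along_layer_forward:
  "1 \<le> i \<Longrightarrow> i + t \<le> n \<Longrightarrow> walk_le n (X, i) (X, i + t) t"
proof (induction t)
  case (Suc t)
  have "nxt n (i + t) = i + Suc t"
    using Suc.prems by (simp add: nxt_def)
  then have "walk_le n (X, i + t) (X, i + Suc t) 1"
    using walk_le_layer_step[of "i + t" n X] Suc.prems by simp
  then show ?case
    using walk_le_trans[OF Suc.IH] Suc.prems by fastforce
qed (simp add: walk_le_refl)

lemma walk_le_along_layer_ordered:
  assumes "i \<le> j" "i \<in> {1..n}" "j \<in> {1..n}"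
  shows "walk_le n (X, i) (X, j) (cyc_dist n i j)"
proof -
  have direct: "walk_le n (X, i) (X, j) (j - i)"
    using walk_le_along_layer_forward[of i "j - i" n X] assms by simp
  have "walk_le n (X, i) (X, 1) (i - 1)"
    using walk_le_along_layer_forward[of 1 "i - 1" n X] assms walk_le_sym by auto
  moreover have "walk_le n (X, 1) (X, n) 1"
    using walk_le_sym[OF walk_le_layer_step[of n n X]] assms by (simp add: nxt_def)
  moreover have "walk_le n (X, n) (X, j) (n - j)"
    using walk_le_along_layer_forward[of j "n - j" n X] assms walk_le_sym by auto
  ultimately have "walk_le n (X, i) (X, j) (i - 1 + 1 + (n - j))"
    using walk_le_trans by blast
  moreover have "i - 1 + 1 + (n - j) = n - (j - i)"
    using assms by auto
  ultimately have around: "walk_le n (X, i) (X, j) (n - (j - i))"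
    by metis
  show ?thesis
    using direct around assms unfolding cyc_dist_def by (auto simp: min_def Let_def)
qed

lemma walk_le_along_layer:
  "i \<in> {1..n} \<Longrightarrow> j \<in> {1..n} \<Longrightarrow> walk_le n (X, i) (X, j) (cyc_dist n i j)"
  using walk_le_along_layer_ordered[of i j n X] walk_le_along_layer_ordered[of j i n X]
    walk_le_sym cyc_dist_commute
  by (cases "i \<le> j") auto

lemma walk_le_up_column:
  assumes "i \<in> {1..n}" "X \<noteq> A" "Y \<noteq> A" "level X \<le> level Y"
  shows "walk_le n (X, i) (Y, i) (level Y - level X)"
proof -
  have dc: "walk_le n (D, i) (C, i) 1" and cb: "walk_le n (C, i) (B, i) 1"
    using assms(1) by (intro walk_le_gen; auto simp: Sgen_def)+
  have "walk_le n (D, i) (B, i) 2"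
    using walk_le_trans[OF dc cb] by (simp add: numeral_2_eq_2)
  then show ?thesis
    using assms dc cb walk_le_refl by (cases X; cases Y) auto
qed

text \<open>The vertex \<open>a_i\<close> is adjacent to both \<open>b_i\<close> and \<open>b_{i-1}\<close>.\<close>

lemma walk_le_up_to_A:
  assumes "i \<in> {1..n}" "X \<noteq> A"
  shows "walk_le n (X, i) (A, i) (3 - level X)"
    and "walk_le n (X, prev n i) (A, i) (3 - level X)"
proof -
  have p: "prev n i \<in> {1..n}"
    using prev_in_range assms(1) .
  have "walk_le n (B, i) (A, i) 1"
    using assms(1) by (intro walk_le_gen) (auto simp: Sgen_def)
  moreover have "((A, nxt n (prev n i)), (B, prev n i)) \<in> Sgen n"
    using p unfolding Sgen_def by blast
  then have "walk_le n (B, prev n i) (A, i) 1"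
    using walk_le_gen nxt_prev[OF assms(1)] by metis
  moreover have "3 - level X = (2 - level X) + 1" and "level X \<le> level B"
    using assms(2) by (cases X; simp)+
  ultimately show "walk_le n (X, i) (A, i) (3 - level X)"
    and "walk_le n (X, prev n i) (A, i) (3 - level X)"
    using walk_le_trans walk_le_up_column[OF assms(1) assms(2), of B]
      walk_le_up_column[OF p assms(2), of B]
    by fastforce+
qed

text \<open>\<open>dist_from_D n j x\<close> is in fact \<open>d(d_j, x)\<close>; only the inequality \<open>\<le>\<close> is needed.\<close>

fun dist_from_D :: "nat \<Rightarrow> nat \<Rightarrow> vertex \<Rightarrow> nat" where
  "dist_from_D n j (A, i) = 3 + min (cyc_dist n j i) (cyc_dist n j (prev n i))"
| "dist_from_D n j (X, i) = level X + cyc_dist n j i"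

lemma walk_le_from_lower_level:
  assumes "i \<in> {1..n}" "j \<in> {1..n}" "X \<noteq> A" "level X \<le> level Y"
  shows "walk_le n (X, i) (Y, j) (dist_from_D n i (Y, j) - level X)"
proof (cases "Y = A")
  case True
  have "walk_le n (X, i) (A, j) (cyc_dist n i j + (3 - level X))"
    using walk_le_trans[OF walk_le_along_layer walk_le_up_to_A(1)] assms by blast
  moreover have "walk_le n (X, i) (A, j) (cyc_dist n i (prev n j) + (3 - level X))"
    using walk_le_trans[OF walk_le_along_layer walk_le_up_to_A(2)] assms prev_in_range by blast
  moreover have "dist_from_D n i (A, j) - level X
      = min (cyc_dist n i j) (cyc_dist n i (prev n j)) + (3 - level X)"
    using assms(3) by (cases X) auto
  ultimately show ?thesis
    using True by (simp add: min_def)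
next
  case False
  have "dist_from_D n i (Y, j) - level X = cyc_dist n i j + (level Y - level X)"
    using False assms(4) by (cases Y) auto
  then show ?thesis
    using walk_le_trans[OF walk_le_along_layer[OF assms(1,2)]
        walk_le_up_column[OF assms(2,3) False assms(4)]]
    by simp
qed

lemma dist_from_D_Sgen:
  assumes "(x, y) \<in> Sgen n" "j \<in> {1..n}"
  shows "dist_from_D n j y \<le> dist_from_D n j x + 1 \<and> dist_from_D n j x \<le> dist_from_D n j y + 1"
proof -
  from assms(1) obtain i where i: "i \<in> {1..n}" and
    e: "(x, y) \<in> {((A,i),(A,nxt n i)), ((B,i),(B,nxt n i)), ((C,i),(C,nxt n i)), ((D,i),(D,nxt n i)),
      ((A,nxt n i),(B,i)), ((A,i),(B,i)), ((B,i),(C,i)), ((C,i),(D,i))}"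
    unfolding Sgen_def by blast
  have "cyc_dist n j (prev n i) \<le> cyc_dist n j i + 1" "cyc_dist n j i \<le> cyc_dist n j (prev n i) + 1"
    using cyc_dist_nxt[OF prev_in_range[OF i] assms(2)] nxt_prev[OF i] by auto
  with e show ?thesis
    using cyc_dist_nxt[OF i assms(2)] prev_nxt[OF i] by auto
qed

lemma dist_from_D_le_relpow:
  "(x, (D, j)) \<in> Sadj n ^^ m \<Longrightarrow> j \<in> {1..n} \<Longrightarrow> dist_from_D n j x \<le> m"
proof (induction m arbitrary: x)
  case 0
  then show ?case
    by (simp add: cyc_dist_self)
next
  case (Suc m)
  obtain y where xy: "(x, y) \<in> Sadj n" and "(y, (D, j)) \<in> Sadj n ^^ m"
    using relpow_Suc_D2[OF Suc.prems(1)] by blast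
  then have "dist_from_D n j y \<le> m"
    using Suc.IH Suc.prems(2) by blast
  moreover have "(x, y) \<in> Sgen n \<or> (y, x) \<in> Sgen n"
    using xy unfolding Sadj_def by blast
  then have "dist_from_D n j x \<le> dist_from_D n j y + 1"
    using dist_from_D_Sgen[of x y n j] dist_from_D_Sgen[of y x n j] Suc.prems(2) by blast
  ultimately show ?case
    by simp
qed

lemma strongly_resolves_D_if_tight:
  assumes "j \<in> {1..n}" "walk_le n u v a" "walk_le n v (D, j) b"
    and "dist_from_D n j u = a + b"
  shows "strongly_resolves n (D, j) u v"
proof -
  have "a + b \<le> Sdist n u (D, j)"
    using dist_from_D_le_relpow[OF Sdist_relpow[OF walk_le_trans[OF assms(2,3)]] assms(1)]
      assms(4) by simp
  moreover have "Sdist n u (D, j) \<le> Sdist n u v + Sdist n v (D, j)"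
    using Sdist_triangle[OF assms(2,3)] .
  moreover have "Sdist n u v \<le> a" "Sdist n v (D, j) \<le> b"
    using Sdist_le assms(2,3) by auto
  ultimately show ?thesis
    unfolding strongly_resolves_def by linarith
qed

lemma strongly_resolves_D_lower_level:
  assumes "i \<in> {1..n}" "j \<in> {1..n}" "X \<noteq> A" "level X \<le> level Y"
  shows "strongly_resolves n (D, i) (Y, j) (X, i)"
proof (rule strongly_resolves_D_if_tight)
  show "walk_le n (Y, j) (X, i) (dist_from_D n i (Y, j) - level X)"
    using walk_le_sym[OF walk_le_from_lower_level[OF assms]] .
  show "walk_le n (X, i) (D, i) (level X)"
    using walk_le_sym[OF walk_le_up_column[OF assms(1), of D X]] assms(3) by simp
  have "level Y \<le> dist_from_D n i (Y, j)"
    by (cases Y) auto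
  then show "dist_from_D n i (Y, j) = dist_from_D n i (Y, j) - level X + level X"
    using assms(4) by simp
qed fact

lemma strongly_resolves_D_A_layer:
  assumes "2 \<le> j" "j < i" "i \<le> n" "2 * (i - j) + 2 \<le> n"
  shows "strongly_resolves n (D, i) (A, j) (A, i)"
proof (rule strongly_resolves_D_if_tight)
  show "walk_le n (A, j) (A, i) (i - j)"
    using walk_le_along_layer_forward[of j "i - j" n A] assms by simp
  show "walk_le n (A, i) (D, i) 3"
    using walk_le_sym[OF walk_le_up_to_A(1)[of i n D]] assms by simp
  have "cyc_dist n i j = i - j" "cyc_dist n i (prev n j) = i - j + 1"
    using assms by (auto simp: cyc_dist_def prev_def Let_def)
  then show "dist_from_D n i (A, j) = i - j + 3"
    by simp
qed (use assms in auto)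

lemma strongly_resolves_endpoints: "strongly_resolves n u u v" "strongly_resolves n v u v"
  unfolding strongly_resolves_def Sdist_def by simp_all

lemma strongly_resolves_swap: "strongly_resolves n w u v \<Longrightarrow> strongly_resolves n w v u"
  unfolding strongly_resolves_def by blast

lemma strongly_resolves_D_upper_half:
  assumes "n = 2 * k" "k < j" "j < i" "i \<le> n"
  shows "strongly_resolves n (D, i) (A, j) (A, i)"
  using strongly_resolves_D_A_layer[of j i n] assms by auto

lemma strongly_resolves_D_at_indices:
  assumes "n = 2 * k" "i \<in> {1..n}" "j \<in> {1..n}" "(X, i) \<noteq> (Y, j)"
    and "X = A \<Longrightarrow> k < i" "Y = A \<Longrightarrow> k < j"
  shows "strongly_resolves n (D, i) (X, i) (Y, j) \<or> strongly_resolves n (D, j) (X, i) (Y, j)"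
proof -
  consider "X \<noteq> A" "level X \<le> level Y" | "Y \<noteq> A" "level Y \<le> level X" | "X = A" "Y = A"
    by (cases X; cases Y) auto
  then show ?thesis
  proof cases
    case 1
    then show ?thesis
      using strongly_resolves_swap strongly_resolves_D_lower_level[OF assms(2,3)] by blast
  next
    case 2
    then show ?thesis
      using strongly_resolves_D_lower_level[OF assms(3,2)] by blast
  next
    case 3
    then have "k < i" "k < j" "i \<noteq> j"
      using assms(4-6) by auto
    then show ?thesis
      using strongly_resolves_swap strongly_resolves_D_upper_half[OF assms(1)] assms(2,3) 3
      by (cases "j < i") auto
  qed
qed

theorem lemma3p12:
  fixes n k :: nat
  assumes "n = 2 * k" and "k \<ge> 2"
  shows "strong_resolving_set n ({(D, i) | i. i \<in> {1..n}} \<union> {(A, i') | i'. i' \<in> {1..k}})"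
  unfolding strong_resolving_set_def
proof (intro conjI ballI impI)
  let ?S = "{(D, i) | i. i \<in> {1..n}} \<union> {(A, i') | i'. i' \<in> {1..k}}"
  show "?S \<subseteq> Sverts n"
    using assms(1) by (auto simp: Sverts_def)
  fix u v
  assume "u \<in> Sverts n" "v \<in> Sverts n" "u \<noteq> v"
  then obtain X i Y j where u: "u = (X, i)" "i \<in> {1..n}" and v: "v = (Y, j)" "j \<in> {1..n}"
    unfolding Sverts_def by blast
  show "\<exists>w\<in>?S. strongly_resolves n w u v"
  proof (cases "u \<in> ?S \<or> v \<in> ?S")
    case True
    then show ?thesis
      using strongly_resolves_endpoints by blast
  next
    case False
    then have "X = A \<Longrightarrow> k < i" "Y = A \<Longrightarrow> k < j"
      using u v by auto
    then have "strongly_resolves n (D, i) u v \<or> strongly_resolves n (D, j) u v"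
      using strongly_resolves_D_at_indices[OF assms(1) u(2) v(2)] \<open>u \<noteq> v\<close> u v by blast
    moreover have "(D, i) \<in> ?S" "(D, j) \<in> ?S"
      using u v by auto
    ultimately show ?thesis
      by blast
  qed
qed

end
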